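(* Let $K$ be a positive integer and let $d,e$ be integers. Then, for each choice of sign (with $\pm$ and $\mp$ correlated throughout), \[ f_{1,2K+1,1}(q^{d},q^{e},q)\pm q^{\frac{K+d+e}{2}}f_{1,2K+1,1}(q^{1+K+d},q^{1+K+e},q) =f_{K+1,K+1,1}\big(\mp q^{(K+d+e)/2},q^{d},q\big) \mp q^{(K+2-d-e)/2}f_{K+1,K+1,1}\big(\mp q^{2+(3K-d-e)/2},q^{K+2-e},q\big). \]
   Context: Let $q=e^{2\pi i\tau}$ with $\operatorname{Im}\tau>0$, and for real $\alpha$ put $q^{\alpha}:=e^{2\pi i\alpha\tau}$. For positive integers $a,b,c$ and $x,y\in\mathbb{C}^*$, the Hecke-type double-sum is $f_{a,b,c}(x,y,q):=\Big(\sum_{r,s\ge0}-\sum_{r,s<0}\Big)(-1)^{r+s}x^ry^sq^{a\binom{r}{2}+brs+c\binom{s}{2}}$. *)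

theory Defs
  imports "HOL-Analysis.Analysis"
begin

text \<open>q = exp(2 pi i tau); q^alpha := exp(2 pi i alpha tau) for real alpha.\<close>
definition qpow :: "complex \<Rightarrow> real \<Rightarrow> complex" where
  "qpow \<tau> \<alpha> = exp (2 * of_real pi * \<i> * of_real \<alpha> * \<tau>)"

text \<open>Summand of the Hecke-type double sum; binomial a*(r choose 2) written as a*(r(r-1)/2).\<close>
definition hecke_term :: "int \<Rightarrow> int \<Rightarrow> int \<Rightarrow> complex \<Rightarrow> complex \<Rightarrow> complex \<Rightarrow> int \<times> int \<Rightarrow> complex" where
  "hecke_term a b c x y \<tau> rs = (case rs of (r, s) \<Rightarrow>
     (-1) powi (r + s) * x powi r * y powi s *
     qpow \<tau> (of_int (a * (r * (r - 1) div 2) + b * r * s + c * (s * (s - 1) div 2))))"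

definition hecke_f :: "int \<Rightarrow> int \<Rightarrow> int \<Rightarrow> complex \<Rightarrow> complex \<Rightarrow> complex \<Rightarrow> complex" where
  "hecke_f a b c x y \<tau> =
     (\<Sum>\<^sub>\<infinity>rs\<in>{(r, s). r \<ge> 0 \<and> s \<ge> 0}. hecke_term a b c x y \<tau> rs)
   - (\<Sum>\<^sub>\<infinity>rs\<in>{(r, s). r < 0 \<and> s < 0}. hecke_term a b c x y \<tau> rs)"

end

theory Submission
  imports Defs
begin

(* Write both sides as sums over all of Z^2 of sg(r,s) t(r,s), where sg is 1 on the quadrant
   r, s >= 0, -1 on r, s < 0 and 0 elsewhere; every such sum converges absolutely. Split the
   index (m,n) of the two f_{K+1,K+1,1}-sums by the parity of m and substitute m = 2s or 2s+1,
   n = r - s in the first, m = -2r-1 or -2r-2, n = r - s in the second: the summands become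
   those of the two f_{1,2K+1,1}-sums, with weight sg(2s, r-s) - sg(-2r-1, r-s) = sg(r,s).
   In other words the two right-hand sums cover the quadrants of the left-hand side cut
   along the diagonal r = s. *)

lemma infsum_diff:
  fixes f g :: "'a \<Rightarrow> 'b::{topological_ab_group_add, t2_space}"
  assumes "f summable_on A" and "g summable_on A"
  shows "infsum (\<lambda>x. f x - g x) A = infsum f A - infsum g A"
  using infsum_add[OF assms(1) summable_on_uminus[THEN iffD2, OF assms(2)]]
  by (simp add: infsum_uminus)

lemma
  fixes g :: "'a \<Rightarrow> 'b::banach"
  assumes "g summable_on UNIV" and "inj h" and "inj k"
    and "range h \<inter> range k = {}" and "range h \<union> range k = UNIV"
  shows summable_on_comp_injective_pair: "(g \<circ> h) summable_on UNIV" "(g \<circ> k) summable_on UNIV"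
    and infsum_split_injective_pair: "infsum g UNIV = infsum (g \<circ> h) UNIV + infsum (g \<circ> k) UNIV"
proof -
  have "g summable_on range h" "g summable_on range k"
    using assms(1) by (auto intro: summable_on_subset_banach)
  then show "(g \<circ> h) summable_on UNIV" "(g \<circ> k) summable_on UNIV"
    using summable_on_reindex assms(2,3) by blast+
  show "infsum g UNIV = infsum (g \<circ> h) UNIV + infsum (g \<circ> k) UNIV"
    using infsum_Un_disjoint[OF \<open>g summable_on range h\<close> \<open>g summable_on range k\<close> assms(4)]
    by (simp add: assms(2,3,5) infsum_reindex)
qed

lemma qpow_add: "qpow \<tau> \<alpha> * qpow \<tau> \<beta> = qpow \<tau> (\<alpha> + \<beta>)"
  unfolding qpow_def by (simp add: exp_add[symmetric] algebra_simps)

lemma qpow_powi: "qpow \<tau> \<alpha> powi n = qpow \<tau> (\<alpha> * of_int n)"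
  unfolding qpow_def by (simp add: exp_power_int algebra_simps)

lemma qpow_nonzero: "qpow \<tau> \<alpha> \<noteq> 0"
  by (simp add: qpow_def)

lemma norm_qpow: "norm (qpow \<tau> \<alpha>) = exp (- (2 * pi * Im \<tau> * \<alpha>))"
  unfolding qpow_def by (simp add: algebra_simps)

lemma norm_eq_norm_qpow:
  assumes "Im \<tau> > 0" and "x \<noteq> 0"
  obtains \<alpha> where "norm x = norm (qpow \<tau> \<alpha>)"
proof
  show "norm x = norm (qpow \<tau> (- ln (norm x) / (2 * pi * Im \<tau>)))"
    using assms by (simp add: norm_qpow)
qed

lemma of_int_times_pred_div_2: "(of_int (r * (r - 1) div 2) :: real) = of_int r * (of_int r - 1) / 2"
proof -
  have "even (r * (r - 1))"
    by simp
  then obtain k where k: "r * (r - 1) = 2 * k"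
    by blast
  then have "(of_int r * (of_int r - 1) :: real) = 2 * of_int k"
    using arg_cong[OF k, of "of_int :: int \<Rightarrow> real"] by simp
  with k show ?thesis by simp
qed

definition hecke_exponent :: "int \<Rightarrow> int \<Rightarrow> int \<Rightarrow> real \<Rightarrow> real \<Rightarrow> int \<Rightarrow> int \<Rightarrow> real" where
  "hecke_exponent a b c \<alpha> \<beta> r s = \<alpha> * of_int r + \<beta> * of_int s + of_int a * (of_int r * (of_int r - 1) / 2)
     + of_int b * of_int r * of_int s + of_int c * (of_int s * (of_int s - 1) / 2)"

lemma hecke_term_qpow:
  "hecke_term a b c (\<sigma> * qpow \<tau> \<alpha>) (qpow \<tau> \<beta>) \<tau> (r, s)
     = (-1) powi (r + s) * \<sigma> powi r * qpow \<tau> (hecke_exponent a b c \<alpha> \<beta> r s)"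
proof -
  have "qpow \<tau> \<alpha> powi r * qpow \<tau> \<beta> powi s
      * qpow \<tau> (of_int (a * (r * (r - 1) div 2) + b * r * s + c * (s * (s - 1) div 2)))
      = qpow \<tau> (hecke_exponent a b c \<alpha> \<beta> r s)"
    by (simp add: qpow_powi qpow_add hecke_exponent_def of_int_times_pred_div_2) (simp add: algebra_simps)
  then show ?thesis
    by (simp add: hecke_term_def power_int_mult_distrib mult_ac)
qed

lemma norm_hecke_term:
  assumes "norm x = norm (qpow \<tau> \<alpha>)" and "norm y = norm (qpow \<tau> \<beta>)"
  shows "norm (hecke_term a b c x y \<tau> (r, s)) = exp (- (2 * pi * Im \<tau> * hecke_exponent a b c \<alpha> \<beta> r s))"
proof -
  have "norm (hecke_term a b c x y \<tau> (r, s)) = norm (hecke_term a b c (1 * qpow \<tau> \<alpha>) (qpow \<tau> \<beta>) \<tau> (r, s))"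
    using assms by (simp add: hecke_term_def norm_mult norm_power_int)
  then show ?thesis
    by (simp only: hecke_term_qpow norm_mult norm_power_int norm_qpow) simp
qed

lemma triangular_plus_linear_ge:
  fixes x \<alpha> :: real
  shows "\<bar>x\<bar> - (\<bar>\<alpha>\<bar> + 3/2)\<^sup>2 / 2 \<le> x * (x - 1) / 2 + \<alpha> * x"
proof -
  have "0 \<le> \<alpha> * x + \<bar>\<alpha>\<bar> * \<bar>x\<bar>"
    by (metis abs_ge_minus_self abs_mult minus_le_iff add.commute le_add_same_cancel1 diff_ge_0_iff_ge diff_minus_eq_add)
  moreover have "0 \<le> (\<bar>x\<bar> - (\<bar>\<alpha>\<bar> + 3/2))\<^sup>2 / 2" and "0 \<le> (\<bar>x\<bar> - x) / 2"
    by simp_all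
  moreover have "x * (x - 1) / 2 + \<alpha> * x - (\<bar>x\<bar> - (\<bar>\<alpha>\<bar> + 3/2)\<^sup>2 / 2)
     = (\<bar>x\<bar> - (\<bar>\<alpha>\<bar> + 3/2))\<^sup>2 / 2 + (\<alpha> * x + \<bar>\<alpha>\<bar> * \<bar>x\<bar>) + (\<bar>x\<bar> - x) / 2"
    by (simp add: power2_eq_square algebra_simps abs_mult_self_eq divide_simps)
  ultimately show ?thesis
    by linarith
qed

lemma times_pred_nonneg: "(0::real) \<le> of_int r * (of_int r - 1)"
proof -
  have "0 \<le> r * (r - 1)"
    by (cases "r \<ge> 1") (auto simp: mult_nonpos_nonpos)
  then show ?thesis
    by (metis of_int_0_le_iff of_int_1 of_int_diff of_int_mult)
qed

lemma hecke_exponent_ge: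
  assumes "a \<ge> 1" and "b \<ge> 0" and "c \<ge> 1" and "r * s \<ge> 0"
  shows "\<bar>of_int r\<bar> + \<bar>of_int s\<bar> - ((\<bar>\<alpha>\<bar> + 3/2)\<^sup>2 + (\<bar>\<beta>\<bar> + 3/2)\<^sup>2) / 2
    \<le> hecke_exponent a b c \<alpha> \<beta> r s"
proof -
  have "of_int r * (of_int r - 1) / 2 \<le> of_int a * (of_int r * (of_int r - 1) / 2 :: real)"
    using times_pred_nonneg[of r] assms(1)
    by (intro mult_right_mono[where c = "of_int r * (of_int r - 1) / 2", of 1, simplified]) auto
  moreover have "of_int s * (of_int s - 1) / 2 \<le> of_int c * (of_int s * (of_int s - 1) / 2 :: real)"
    using times_pred_nonneg[of s] assms(3)
    by (intro mult_right_mono[where c = "of_int s * (of_int s - 1) / 2", of 1, simplified]) auto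
  moreover have "0 \<le> b * (r * s)"
    using assms(2,4) by simp
  then have "(0::real) \<le> of_int b * of_int r * of_int s"
    by (metis mult.assoc of_int_0_le_iff of_int_mult)
  ultimately show ?thesis
    using triangular_plus_linear_ge[of "of_int r" \<alpha>] triangular_plus_linear_ge[of "of_int s" \<beta>]
    unfolding hecke_exponent_def by argo
qed

lemma summable_on_geometric_product:
  fixes \<rho> :: real
  assumes "0 \<le> \<rho>" and "\<rho> < 1"
  shows "(\<lambda>(i::nat, j::nat). \<rho> ^ i * \<rho> ^ j) summable_on UNIV"
proof -
  have "Infinite_Set_Sum.abs_summable_on (\<lambda>n::nat. \<rho> ^ n) UNIV"
    using assms by (simp add: abs_summable_on_nat_iff' summable_geometric)
  then have "Infinite_Set_Sum.abs_summable_on (\<lambda>(i::nat, j::nat). \<rho> ^ i * \<rho> ^ j) (UNIV \<times> UNIV)"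
    by (intro abs_summable_on_product) auto
  then have "Infinite_Sum.abs_summable_on (\<lambda>(i::nat, j::nat). \<rho> ^ i * \<rho> ^ j) UNIV"
    using abs_summable_equivalent by (metis UNIV_Times_UNIV)
  then show ?thesis
    using assms by (simp add: case_prod_beta' abs_mult)
qed

lemma norm_hecke_term_le:
  assumes "a \<ge> 1" and "b \<ge> 0" and "c \<ge> 1" and "r * s \<ge> 0" and "Im \<tau> > 0"
    and "norm x = norm (qpow \<tau> \<alpha>)" and "norm y = norm (qpow \<tau> \<beta>)"
    and "real i \<le> \<bar>of_int r\<bar>" and "real j \<le> \<bar>of_int s\<bar>"
  shows "norm (hecke_term a b c x y \<tau> (r, s)) \<le>
     exp (2 * pi * Im \<tau> * (((\<bar>\<alpha>\<bar> + 3/2)\<^sup>2 + (\<bar>\<beta>\<bar> + 3/2)\<^sup>2) / 2))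
     * exp (- (2 * pi * Im \<tau>)) ^ i * exp (- (2 * pi * Im \<tau>)) ^ j"
proof -
  define L where "L = 2 * pi * Im \<tau>"
  define C where "C = ((\<bar>\<alpha>\<bar> + 3/2)\<^sup>2 + (\<bar>\<beta>\<bar> + 3/2)\<^sup>2) / 2"
  have "L > 0"
    using assms(5) by (simp add: L_def)
  moreover have "real i + real j - C \<le> hecke_exponent a b c \<alpha> \<beta> r s"
    using hecke_exponent_ge[OF assms(1-4), of \<alpha> \<beta>] assms(8,9) unfolding C_def by linarith
  ultimately have "norm (hecke_term a b c x y \<tau> (r, s)) \<le> exp (- (L * (real i + real j - C)))"
    unfolding norm_hecke_term[OF assms(6,7)] L_def[symmetric] by (simp add: mult_left_mono)
  also have "\<dots> = exp (L * C) * exp (- L) ^ i * exp (- L) ^ j"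
    by (simp add: exp_of_nat_mult[symmetric] exp_add[symmetric] algebra_simps)
  finally show ?thesis
    unfolding L_def C_def .
qed

lemma hecke_term_summable_on_quadrants:
  assumes "a \<ge> 1" and "b \<ge> 0" and "c \<ge> 1" and "Im \<tau> > 0" and "x \<noteq> 0" and "y \<noteq> 0"
  shows "hecke_term a b c x y \<tau> summable_on {(r, s). 0 \<le> r \<and> 0 \<le> s}"
    and "hecke_term a b c x y \<tau> summable_on {(r, s). r < 0 \<and> s < 0}"
proof -
  obtain \<alpha> \<beta> where \<alpha>: "norm x = norm (qpow \<tau> \<alpha>)" and \<beta>: "norm y = norm (qpow \<tau> \<beta>)"
    using norm_eq_norm_qpow[OF assms(4)] assms(5,6) by metis
  define \<rho> where "\<rho> = exp (- (2 * pi * Im \<tau>))"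
  define M where "M = exp (2 * pi * Im \<tau> * (((\<bar>\<alpha>\<bar> + 3/2)\<^sup>2 + (\<bar>\<beta>\<bar> + 3/2)\<^sup>2) / 2))"
  have geometric: "(\<lambda>p. M * (case p of (i, j) \<Rightarrow> \<rho> ^ i * \<rho> ^ j)) summable_on UNIV"
    using assms(4) by (intro summable_on_cmult_right summable_on_geometric_product) (auto simp: \<rho>_def)
  have summable_on_image: "hecke_term a b c x y \<tau> summable_on A"
    if bij: "bij_betw h UNIV A"
      and h: "\<And>i j. fst (h (i, j)) * snd (h (i, j)) \<ge> 0 \<and> real i \<le> \<bar>of_int (fst (h (i, j)))\<bar>
        \<and> real j \<le> \<bar>of_int (snd (h (i, j)))\<bar>"
    for h :: "nat \<times> nat \<Rightarrow> int \<times> int" and A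
  proof -
    have "(\<lambda>p. norm (hecke_term a b c x y \<tau> (h p))) summable_on UNIV"
    proof (rule summable_on_comparison_test[OF geometric])
      fix p :: "nat \<times> nat"
      obtain i j where "p = (i, j)"
        by (cases p)
      then show "norm (hecke_term a b c x y \<tau> (h p)) \<le> M * (case p of (i, j) \<Rightarrow> \<rho> ^ i * \<rho> ^ j)"
        using norm_hecke_term_le[OF assms(1-3) _ assms(4) \<alpha> \<beta>, of "fst (h p)" "snd (h p)" i j] h[of i j]
        by (simp add: M_def \<rho>_def mult.assoc)
    qed simp
    then have "(\<lambda>p. hecke_term a b c x y \<tau> (h p)) summable_on UNIV"
      by (rule abs_summable_summable)
    then show ?thesis
      using summable_on_reindex_bij_betw[OF bij] by blast
  qed
  have "bij_betw (\<lambda>(i, j). (int i, int j)) UNIV {(r, s). 0 \<le> r \<and> 0 \<le> s}"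
    by (rule bij_betwI[where g = "\<lambda>(r, s). (nat r, nat s)"]) auto
  then show "hecke_term a b c x y \<tau> summable_on {(r, s). 0 \<le> r \<and> 0 \<le> s}"
    by (rule summable_on_image) auto
  have "bij_betw (\<lambda>(i, j). (- int i - 1, - int j - 1)) UNIV {(r, s). r < 0 \<and> s < 0}"
    by (rule bij_betwI[where g = "\<lambda>(r, s). (nat (- r - 1), nat (- s - 1))"]) auto
  then show "hecke_term a b c x y \<tau> summable_on {(r, s). r < 0 \<and> s < 0}"
    by (rule summable_on_image) (auto simp: mult_nonpos_nonpos)
qed

definition hecke_sign :: "int \<times> int \<Rightarrow> complex" where
  "hecke_sign = (\<lambda>(r, s). if 0 \<le> r \<and> 0 \<le> s then 1 else if r < 0 \<and> s < 0 then -1 else 0)"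

lemma hecke_f_eq_signed_sum:
  assumes "a \<ge> 1" and "b \<ge> 0" and "c \<ge> 1" and "Im \<tau> > 0" and "x \<noteq> 0" and "y \<noteq> 0"
  shows "(\<lambda>p. hecke_sign p * hecke_term a b c x y \<tau> p) summable_on UNIV"
    and "hecke_f a b c x y \<tau> = (\<Sum>\<^sub>\<infinity>p. hecke_sign p * hecke_term a b c x y \<tau> p)"
proof -
  define f where "f = hecke_term a b c x y \<tau>"
  define P :: "(int \<times> int) set" where "P = {(r, s). 0 \<le> r \<and> 0 \<le> s}"
  define N :: "(int \<times> int) set" where "N = {(r, s). r < 0 \<and> s < 0}"
  have disjoint: "P \<inter> N = {}"
    by (auto simp: P_def N_def)
  have sign_P: "hecke_sign p * f p = f p" if "p \<in> P" for p
    using that by (auto simp: P_def hecke_sign_def)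
  have sign_N: "hecke_sign p * f p = - f p" if "p \<in> N" for p
    using that by (auto simp: N_def hecke_sign_def)
  have sign_outside: "hecke_sign p * f p = 0" if "p \<notin> P \<union> N" for p
    using that by (auto simp: P_def N_def hecke_sign_def split: prod.splits)
  have summable_P: "(\<lambda>p. hecke_sign p * f p) summable_on P"
    using hecke_term_summable_on_quadrants(1)[OF assms] summable_on_cong[of P, OF sign_P]
    by (simp add: f_def P_def)
  have summable_N: "(\<lambda>p. hecke_sign p * f p) summable_on N"
    using hecke_term_summable_on_quadrants(2)[OF assms] summable_on_cong[of N, OF sign_N]
    by (simp add: f_def N_def summable_on_uminus)
  have "(\<lambda>p. hecke_sign p * f p) summable_on P \<union> N"
    by (rule summable_on_Un_disjoint[OF summable_P summable_N disjoint])
  then show "(\<lambda>p. hecke_sign p * f p) summable_on UNIV"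
    by (rule summable_on_cong_neutral[THEN iffD1, rotated -1]) (use sign_outside in auto)
  have "(\<Sum>\<^sub>\<infinity>p. hecke_sign p * f p) = (\<Sum>\<^sub>\<infinity>p\<in>P \<union> N. hecke_sign p * f p)"
    by (rule infsum_cong_neutral) (use sign_outside in auto)
  also have "\<dots> = (\<Sum>\<^sub>\<infinity>p\<in>P. f p) + (\<Sum>\<^sub>\<infinity>p\<in>N. - f p)"
    by (simp add: infsum_Un_disjoint[OF summable_P summable_N disjoint] sign_P sign_N cong: infsum_cong)
  also have "\<dots> = hecke_f a b c x y \<tau>"
    by (simp add: hecke_f_def f_def P_def N_def infsum_uminus)
  finally show "hecke_f a b c x y \<tau> = (\<Sum>\<^sub>\<infinity>p. hecke_sign p * hecke_term a b c x y \<tau> p)"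
    by (simp add: f_def)
qed

lemma hecke_sign_shear:
  "hecke_sign (2 * s + 1, r - s) = hecke_sign (2 * s, r - s)"
  "hecke_sign (- (2 * r) - 2, r - s) = hecke_sign (- (2 * r) - 1, r - s)"
  "hecke_sign (2 * s, r - s) - hecke_sign (- (2 * r) - 1, r - s) = hecke_sign (r, s)"
  by (auto simp: hecke_sign_def) presburger

lemma hecke_signed_sum_dissection:
  fixes F G A B :: "int \<times> int \<Rightarrow> complex"
  assumes summable_F: "(\<lambda>p. hecke_sign p * F p) summable_on UNIV"
    and summable_G: "(\<lambda>p. hecke_sign p * G p) summable_on UNIV"
    and F: "\<And>r s. F (2 * s, r - s) = A (r, s)" "\<And>r s. F (2 * s + 1, r - s) = B (r, s)"
    and G: "\<And>r s. G (- (2 * r) - 1, r - s) = A (r, s)" "\<And>r s. G (- (2 * r) - 2, r - s) = B (r, s)"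
  shows "(\<Sum>\<^sub>\<infinity>p. hecke_sign p * F p) - (\<Sum>\<^sub>\<infinity>p. hecke_sign p * G p)
    = (\<Sum>\<^sub>\<infinity>p. hecke_sign p * A p) + (\<Sum>\<^sub>\<infinity>p. hecke_sign p * B p)"
proof -
  define h0 h1 k0 k1 :: "int \<times> int \<Rightarrow> int \<times> int" where
    "h0 = (\<lambda>(r, s). (2 * s, r - s))" and "h1 = (\<lambda>(r, s). (2 * s + 1, r - s))"
    and "k0 = (\<lambda>(r, s). (- (2 * r) - 1, r - s))" and "k1 = (\<lambda>(r, s). (- (2 * r) - 2, r - s))"
  have inj: "inj h0" "inj h1" "inj k0" "inj k1"
    by (auto simp: inj_def h0_def h1_def k0_def k1_def)
  have preimages: "even m \<Longrightarrow> h0 (n + m div 2, m div 2) = (m, n)"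
    "odd m \<Longrightarrow> h1 (n + m div 2, m div 2) = (m, n)"
    "odd m \<Longrightarrow> k0 (- (m div 2) - 1, - (m div 2) - 1 - n) = (m, n)"
    "even m \<Longrightarrow> k1 (- (m div 2) - 1, - (m div 2) - 1 - n) = (m, n)" for m n
    by (auto simp: h0_def h1_def k0_def k1_def elim!: evenE oddE)
  have "p \<in> range h0 \<union> range h1" "p \<in> range k0 \<union> range k1" for p
    using preimages[of "fst p" "snd p"] by (cases "even (fst p)"; metis UnI1 UnI2 rangeI prod.collapse)+
  moreover have "range h0 \<inter> range h1 = {}" "range k0 \<inter> range k1 = {}"
    by (auto simp: h0_def h1_def k0_def k1_def; presburger)+
  ultimately have ranges: "range h0 \<inter> range h1 = {}" "range h0 \<union> range h1 = UNIV"
    "range k0 \<inter> range k1 = {}" "range k0 \<union> range k1 = UNIV"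
    by blast+
  define sign_E sign_N :: "int \<times> int \<Rightarrow> complex" where
    "sign_E = (\<lambda>(r, s). hecke_sign (2 * s, r - s))" and "sign_N = (\<lambda>(r, s). hecke_sign (- (2 * r) - 1, r - s))"
  have compositions: "(\<lambda>p. hecke_sign p * F p) \<circ> h0 = (\<lambda>p. sign_E p * A p)"
    "(\<lambda>p. hecke_sign p * F p) \<circ> h1 = (\<lambda>p. sign_E p * B p)"
    "(\<lambda>p. hecke_sign p * G p) \<circ> k0 = (\<lambda>p. sign_N p * A p)"
    "(\<lambda>p. hecke_sign p * G p) \<circ> k1 = (\<lambda>p. sign_N p * B p)"
    by (auto simp: h0_def h1_def k0_def k1_def sign_E_def sign_N_def F G hecke_sign_shear(1,2))
  note split_F = summable_on_comp_injective_pair[OF summable_F inj(1,2) ranges(1,2), unfolded compositions]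
    infsum_split_injective_pair[OF summable_F inj(1,2) ranges(1,2), unfolded compositions]
  note split_G = summable_on_comp_injective_pair[OF summable_G inj(3,4) ranges(3,4), unfolded compositions]
    infsum_split_injective_pair[OF summable_G inj(3,4) ranges(3,4), unfolded compositions]
  have sign_E_minus_sign_N: "sign_E p - sign_N p = hecke_sign p" for p
    by (cases p) (simp add: sign_E_def sign_N_def hecke_sign_shear(3))
  have "(\<Sum>\<^sub>\<infinity>p. hecke_sign p * F p) - (\<Sum>\<^sub>\<infinity>p. hecke_sign p * G p)
      = ((\<Sum>\<^sub>\<infinity>p. sign_E p * A p) - (\<Sum>\<^sub>\<infinity>p. sign_N p * A p))
        + ((\<Sum>\<^sub>\<infinity>p. sign_E p * B p) - (\<Sum>\<^sub>\<infinity>p. sign_N p * B p))"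
    by (simp add: split_F(3) split_G(3))
  also have "\<dots> = (\<Sum>\<^sub>\<infinity>p. (sign_E p - sign_N p) * A p) + (\<Sum>\<^sub>\<infinity>p. (sign_E p - sign_N p) * B p)"
    by (simp add: infsum_diff split_F(1,2) split_G(1,2) left_diff_distrib)
  finally show ?thesis
    by (simp add: sign_E_minus_sign_N)
qed

lemma power_int_involution_cong:
  fixes z :: "'a::division_ring"
  assumes "z * z = 1" and "even (m - n)"
  shows "z powi m = z powi n"
proof -
  obtain k where m: "m = n + 2 * k"
    using assms(2) by (metis add_diff_cancel_left' diff_add_cancel evenE)
  have "z \<noteq> 0"
    using assms(1) by auto
  then show ?thesis
    by (simp add: m power_int_add power_int_mult power2_eq_square assms(1))
qed

lemma hecke_term_shears:
  fixes K d e r s :: int and \<epsilon> \<tau> :: complex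
  assumes "\<epsilon> * \<epsilon> = 1"
  defines "T0 \<equiv> hecke_term 1 (2 * K + 1) 1 (qpow \<tau> (of_int d)) (qpow \<tau> (of_int e)) \<tau>"
    and "T1 \<equiv> hecke_term 1 (2 * K + 1) 1 (qpow \<tau> (of_int (1 + K + d))) (qpow \<tau> (of_int (1 + K + e))) \<tau>"
    and "U \<equiv> hecke_term (K + 1) (K + 1) 1 (- \<epsilon> * qpow \<tau> (of_int (K + d + e) / 2)) (qpow \<tau> (of_int d)) \<tau>"
    and "V \<equiv> hecke_term (K + 1) (K + 1) 1 (- \<epsilon> * qpow \<tau> (2 + of_int (3 * K - d - e) / 2))
      (qpow \<tau> (of_int (K + 2 - e))) \<tau>"
  shows "U (2 * s, r - s) = T0 (r, s)"
    and "U (2 * s + 1, r - s) = \<epsilon> * qpow \<tau> (of_int (K + d + e) / 2) * T1 (r, s)"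
    and "\<epsilon> * qpow \<tau> (of_int (K + 2 - d - e) / 2) * V (- (2 * r) - 1, r - s) = T0 (r, s)"
    and "\<epsilon> * qpow \<tau> (of_int (K + 2 - d - e) / 2) * V (- (2 * r) - 2, r - s)
      = \<epsilon> * qpow \<tau> (of_int (K + d + e) / 2) * T1 (r, s)"
proof -
  have "(-1::complex) * (-1) = 1" and "(- \<epsilon>) * (- \<epsilon>) = 1"
    using assms(1) by simp_all
  note involution = power_int_involution_cong[OF this(1)] power_int_involution_cong[OF this(2)]
  have minus_one_powers: "(-1::complex) powi (2 * s + (r - s)) = (-1) powi (r + s)"
    "(-1::complex) powi (2 * s + 1 + (r - s)) = - ((-1) powi (r + s))"
    "(-1::complex) powi (- (2 * r) - 1 + (r - s)) = - ((-1) powi (r + s))"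
    "(-1::complex) powi (- (2 * r) - 2 + (r - s)) = (-1) powi (r + s)"
    by (simp_all add: involution(1)[of _ "r + s + 1"] involution(1)[of _ "r + s"] power_int_add)
  have epsilon_powers: "(- \<epsilon>) powi (2 * s) = 1" "(- \<epsilon>) powi (2 * s + 1) = - \<epsilon>"
    "(- \<epsilon>) powi (- (2 * r) - 1) = - \<epsilon>" "(- \<epsilon>) powi (- (2 * r) - 2) = 1"
    using involution(2)[of _ 0] involution(2)[of _ 1] by simp_all
  have exponents:
    "hecke_exponent (K + 1) (K + 1) 1 (of_int (K + d + e) / 2) (of_int d) (2 * s) (r - s)
      = hecke_exponent 1 (2 * K + 1) 1 (of_int d) (of_int e) r s"
    "hecke_exponent (K + 1) (K + 1) 1 (of_int (K + d + e) / 2) (of_int d) (2 * s + 1) (r - s)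
      = of_int (K + d + e) / 2 + hecke_exponent 1 (2 * K + 1) 1 (of_int (1 + K + d)) (of_int (1 + K + e)) r s"
    "of_int (K + 2 - d - e) / 2
      + hecke_exponent (K + 1) (K + 1) 1 (2 + of_int (3 * K - d - e) / 2) (of_int (K + 2 - e)) (- (2 * r) - 1) (r - s)
      = hecke_exponent 1 (2 * K + 1) 1 (of_int d) (of_int e) r s"
    "of_int (K + 2 - d - e) / 2
      + hecke_exponent (K + 1) (K + 1) 1 (2 + of_int (3 * K - d - e) / 2) (of_int (K + 2 - e)) (- (2 * r) - 2) (r - s)
      = of_int (K + d + e) / 2 + hecke_exponent 1 (2 * K + 1) 1 (of_int (1 + K + d)) (of_int (1 + K + e)) r s"
    by (simp_all add: hecke_exponent_def field_simps)
  note qpow_terms = hecke_term_qpow hecke_term_qpow[where \<sigma> = 1, simplified]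
  show "U (2 * s, r - s) = T0 (r, s)"
    unfolding U_def T0_def qpow_terms minus_one_powers epsilon_powers exponents by simp
  show "U (2 * s + 1, r - s) = \<epsilon> * qpow \<tau> (of_int (K + d + e) / 2) * T1 (r, s)"
    unfolding U_def T1_def qpow_terms minus_one_powers epsilon_powers exponents
    by (simp add: qpow_add[symmetric] mult_ac)
  have "\<epsilon> * qpow \<tau> (of_int (K + 2 - d - e) / 2) * V (- (2 * r) - 1, r - s)
      = (\<epsilon> * \<epsilon>) * (-1) powi (r + s) * qpow \<tau> (of_int (K + 2 - d - e) / 2
        + hecke_exponent (K + 1) (K + 1) 1 (2 + of_int (3 * K - d - e) / 2) (of_int (K + 2 - e)) (- (2 * r) - 1) (r - s))"
    unfolding V_def qpow_terms minus_one_powers epsilon_powers by (simp add: qpow_add[symmetric] mult_ac)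
  then show "\<epsilon> * qpow \<tau> (of_int (K + 2 - d - e) / 2) * V (- (2 * r) - 1, r - s) = T0 (r, s)"
    unfolding T0_def qpow_terms exponents assms(1) by simp
  have "\<epsilon> * qpow \<tau> (of_int (K + 2 - d - e) / 2) * V (- (2 * r) - 2, r - s)
      = \<epsilon> * (-1) powi (r + s) * qpow \<tau> (of_int (K + 2 - d - e) / 2
        + hecke_exponent (K + 1) (K + 1) 1 (2 + of_int (3 * K - d - e) / 2) (of_int (K + 2 - e)) (- (2 * r) - 2) (r - s))"
    unfolding V_def qpow_terms minus_one_powers epsilon_powers by (simp add: qpow_add[symmetric] mult_ac)
  then show "\<epsilon> * qpow \<tau> (of_int (K + 2 - d - e) / 2) * V (- (2 * r) - 2, r - s)
      = \<epsilon> * qpow \<tau> (of_int (K + d + e) / 2) * T1 (r, s)"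
    unfolding T1_def qpow_terms exponents by (simp add: qpow_add[symmetric] mult_ac)
qed

theorem proposition5p1:
  fixes K d e :: int and \<tau> \<epsilon> :: complex
  assumes "K > 0" and "Im \<tau> > 0" and "\<epsilon> = 1 \<or> \<epsilon> = -1"
  shows "hecke_f 1 (2 * K + 1) 1 (qpow \<tau> (of_int d)) (qpow \<tau> (of_int e)) \<tau>
         + \<epsilon> * qpow \<tau> (of_int (K + d + e) / 2)
             * hecke_f 1 (2 * K + 1) 1 (qpow \<tau> (of_int (1 + K + d))) (qpow \<tau> (of_int (1 + K + e))) \<tau>
       = hecke_f (K + 1) (K + 1) 1 (- \<epsilon> * qpow \<tau> (of_int (K + d + e) / 2)) (qpow \<tau> (of_int d)) \<tau>
         - \<epsilon> * qpow \<tau> (of_int (K + 2 - d - e) / 2)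
             * hecke_f (K + 1) (K + 1) 1 (- \<epsilon> * qpow \<tau> (2 + of_int (3 * K - d - e) / 2))
                 (qpow \<tau> (of_int (K + 2 - e))) \<tau>"
proof -
  have \<epsilon>: "\<epsilon> * \<epsilon> = 1" "\<epsilon> \<noteq> 0"
    using assms(3) by auto
  define T0 where "T0 = hecke_term 1 (2 * K + 1) 1 (qpow \<tau> (of_int d)) (qpow \<tau> (of_int e)) \<tau>"
  define T1 where "T1 = hecke_term 1 (2 * K + 1) 1 (qpow \<tau> (of_int (1 + K + d))) (qpow \<tau> (of_int (1 + K + e))) \<tau>"
  define U where "U = hecke_term (K + 1) (K + 1) 1 (- \<epsilon> * qpow \<tau> (of_int (K + d + e) / 2)) (qpow \<tau> (of_int d)) \<tau>"
  define V where "V = hecke_term (K + 1) (K + 1) 1 (- \<epsilon> * qpow \<tau> (2 + of_int (3 * K - d - e) / 2))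
    (qpow \<tau> (of_int (K + 2 - e))) \<tau>"
  define c1 where "c1 = \<epsilon> * qpow \<tau> (of_int (K + d + e) / 2)"
  define c2 where "c2 = \<epsilon> * qpow \<tau> (of_int (K + 2 - d - e) / 2)"
  have "K \<ge> 0"
    using assms(1) by simp
  then have summable: "(\<lambda>p. hecke_sign p * U p) summable_on UNIV" "(\<lambda>p. hecke_sign p * V p) summable_on UNIV"
    and expansions: "hecke_f 1 (2 * K + 1) 1 (qpow \<tau> (of_int d)) (qpow \<tau> (of_int e)) \<tau> = (\<Sum>\<^sub>\<infinity>p. hecke_sign p * T0 p)"
    "hecke_f 1 (2 * K + 1) 1 (qpow \<tau> (of_int (1 + K + d))) (qpow \<tau> (of_int (1 + K + e))) \<tau> = (\<Sum>\<^sub>\<infinity>p. hecke_sign p * T1 p)"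
    "hecke_f (K + 1) (K + 1) 1 (- \<epsilon> * qpow \<tau> (of_int (K + d + e) / 2)) (qpow \<tau> (of_int d)) \<tau> = (\<Sum>\<^sub>\<infinity>p. hecke_sign p * U p)"
    "hecke_f (K + 1) (K + 1) 1 (- \<epsilon> * qpow \<tau> (2 + of_int (3 * K - d - e) / 2)) (qpow \<tau> (of_int (K + 2 - e))) \<tau>
      = (\<Sum>\<^sub>\<infinity>p. hecke_sign p * V p)"
    unfolding T0_def T1_def U_def V_def
    by (auto intro!: hecke_f_eq_signed_sum assms(2) simp: \<epsilon>(2) qpow_nonzero)
  have "(\<Sum>\<^sub>\<infinity>p. hecke_sign p * U p) - (\<Sum>\<^sub>\<infinity>p. hecke_sign p * (c2 * V p))
      = (\<Sum>\<^sub>\<infinity>p. hecke_sign p * T0 p) + (\<Sum>\<^sub>\<infinity>p. hecke_sign p * (c1 * T1 p))"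
  proof (rule hecke_signed_sum_dissection)
    show "(\<lambda>p. hecke_sign p * (c2 * V p)) summable_on UNIV"
      using summable_on_cmult_right[OF summable(2), of c2] by (simp add: mult.left_commute)
  qed (use summable hecke_term_shears[where K = K and d = d and e = e and \<tau> = \<tau>, OF \<epsilon>(1),
      folded T0_def T1_def U_def V_def c1_def c2_def] in simp_all)
  then show ?thesis
    unfolding expansions c1_def c2_def by (simp add: mult.left_commute[of "hecke_sign _"] infsum_cmult_right')
qed

end
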